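(* Let $x\in X(l_1,\dots,l_n,l_\infty)$ and let $i\ne j$ be indices in $\{1,\dots,n\}$ with $l_i=l_j$. Then there is $g\in J_n$ such that $gx$ is the diagram obtained from $x$ by interchanging the labels $z_i$ and $z_j$ (i.e. exchanging the positions of $z_i$ and $z_j$) while keeping the unlabelled arc configuration (the numbers of arcs between each pair of positions) unchanged.
   Context: Cactus group: $J_n$ is the group generated by $s_{p,q}$, $1\le p<q\le n$, subject to the relations $s_{p,q}^2=e$; $s_{p,q}s_{p',q'}=s_{p',q'}s_{p,q}$ if $[p,q]$ and $[p',q']$ are disjoint; $s_{p,q}s_{p',q'}s_{p,q}=s_{p+q-q',p+q-p'}$ if $p\le p'<q'\le q$. Arc diagrams: fix nonnegative integers $l_1,\dots,l_n,l_\infty$. On the boundary circle of a closed disc place $n+1$ marked positions: position $0$ (occupied by the distinguished point $z_\infty$) and positions $1,\dots,n$ following it in clockwise order. An arc diagram consists of a bijective assignment of the labels $z_1,\dots,z_n$ to the positions $1,\dots,n$, together with a finite collection of simple arcs in the disc, pairwise disjoint except possibly at endpoints, each joining two distinct marked points, such that the point labelled $z_j$ is an endpoint of exactly $l_j$ arcs for each $j\in\{1,\dots,n,\infty\}$ ($l_j$ is the valence of $z_j$). Parallel arcs are allowed. Diagrams are considered up to isotopy fixing the marked points; equivalently a diagram is determined by the labelling and the number of arcs joining each pair of marked points. $X(l_1,\dots,l_n,l_\infty)$ is the set of all such diagrams. Action: for $1\le p<q\le n$, $s_{p,q}x$ is obtained by choosing a chord $\ell$ separating positions $p,\dots,q$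 from the other marked points, isotoping arcs to cross $\ell$ at most once, reflecting the cut-off region containing positions $p,\dots,q$ by the reflection reversing $\ell$ (so the label at position $p+t$ moves to position $q-t$ and crossing points on $\ell$ are reversed in order), keeping the rest unchanged, and reconnecting arcs at $\ell$. Words act right to left; this is an action of $J_n$. *)

theory Defs
  imports Main
begin

text \<open>
Positions on the boundary circle are 0 (the point z_infinity) and
1..n, in clockwise order. A diagram is a pair (lab, m):
  lab p  = the index j of the label z_j sitting at position p (for 1 <= p <= n),
           and lab p = 0 for all other p;
  m a b  = number of arcs joining positions a and b (0 <= a,b <= n).
\<close>

type_synonym diagram = "(nat \<Rightarrow> nat) \<times> (nat \<Rightarrow> nat \<Rightarrow> nat)"

definition is_diagram :: "nat \<Rightarrow> (nat \<Rightarrow> nat) \<Rightarrow> nat \<Rightarrow> diagram \<Rightarrow> bool" where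
  "is_diagram n l linf x \<longleftrightarrow>
     (let lab = fst x; m = snd x in
       bij_betw lab {1..n} {1..n}
     \<and> (\<forall>p. p \<notin> {1..n} \<longrightarrow> lab p = 0)
     \<and> (\<forall>a b. m a b = m b a)
     \<and> (\<forall>a. m a a = 0)
     \<and> (\<forall>a b. n < a \<longrightarrow> m a b = 0)
     \<comment> \<open>arcs are pairwise non-crossing (they may share endpoints)\<close>
     \<and> (\<forall>a b c d. a < c \<and> c < b \<and> b < d \<and> 0 < m a b \<longrightarrow> m c d = 0)
     \<comment> \<open>valences\<close>
     \<and> (\<forall>p\<in>{1..n}. (\<Sum>q\<le>n. m p q) = l (lab p))
     \<and> (\<Sum>q\<le>n. m 0 q) = linf)"

definition X :: "nat \<Rightarrow> (nat \<Rightarrow> nat) \<Rightarrow> nat \<Rightarrow> diagram set" where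
  "X n l linf = {x. is_diagram n l linf x}"

definition refl_pos :: "nat \<Rightarrow> nat \<Rightarrow> nat \<Rightarrow> nat" where
  "refl_pos p q a = (if p \<le> a \<and> a \<le> q then p + q - a else a)"

definition outs :: "nat \<Rightarrow> nat \<Rightarrow> nat \<Rightarrow> nat list" where
  "outs n p q = [Suc q..<Suc n] @ [0..<p]"

text \<open>The arcs crossing the chord separating p..q from the rest, listed in the order
of their crossing points along the chord (from the p-side to the q-side):
by inside endpoint ascending, and for a fixed inside endpoint by outside
endpoint descending in the clockwise order of outs.\<close>
definition crossings :: "nat \<Rightarrow> nat \<Rightarrow> nat \<Rightarrow> (nat \<Rightarrow> nat \<Rightarrow> nat) \<Rightarrow> (nat \<times> nat) list" where
  "crossings n p q m =
     concat (map (\<lambda>a. concat (map (\<lambda>c. replicate (m a c) (a, c)) (rev (outs n p q)))) [p..<Suc q])"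

text \<open>After reflecting the inside region, the crossing points on the chord are reversed
and the inside parts of the crossing arcs are reflected; reconnecting with the
(unchanged) outside parts pairs the k-th reflected inside endpoint (ascending) with the
k-th outside endpoint of the old crossing sequence.\<close>
definition new_crossings :: "nat \<Rightarrow> nat \<Rightarrow> nat \<Rightarrow> (nat \<Rightarrow> nat \<Rightarrow> nat) \<Rightarrow> (nat \<times> nat) list" where
  "new_crossings n p q m =
     zip (concat (map (\<lambda>a. replicate (\<Sum>c\<leftarrow>outs n p q. m (refl_pos p q a) c) a) [p..<Suc q]))
         (map snd (crossings n p q m))"

definition s_act :: "nat \<Rightarrow> nat \<Rightarrow> nat \<Rightarrow> diagram \<Rightarrow> diagram" where
  "s_act n p q x =
     (let lab = fst x; m = snd x;
          ins = (\<lambda>a. p \<le> a \<and> a \<le> q);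
          nc = new_crossings n p q m in
      (\<lambda>a. lab (refl_pos p q a),
       \<lambda>a b. if n < a \<or> n < b then 0
             else if ins a \<and> ins b then m (refl_pos p q a) (refl_pos p q b)
             else if \<not> ins a \<and> \<not> ins b then m a b
             else if ins a then count_list nc (a, b)
             else count_list nc (b, a)))"

text \<open>Elements of J_n are represented by words in the generators s_{p,q}
(pairs (p,q) with 1 <= p < q <= n); words act right to left.\<close>
definition cactus_word :: "nat \<Rightarrow> (nat \<times> nat) list \<Rightarrow> bool" where
  "cactus_word n w \<longleftrightarrow> (\<forall>(p, q)\<in>set w. 1 \<le> p \<and> p < q \<and> q \<le> n)"

definition act_word :: "nat \<Rightarrow> (nat \<times> nat) list \<Rightarrow> diagram \<Rightarrow> diagram" where
  "act_word n w x = foldr (\<lambda>(p, q) y. s_act n p q y) w x"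

definition swap_labels :: "nat \<Rightarrow> nat \<Rightarrow> diagram \<Rightarrow> diagram" where
  "swap_labels i j x =
     ((\<lambda>a. if fst x a = i then j else if fst x a = j then i else fst x a), snd x)"

end

theory Submission
  imports Defs "HOL-Library.Multiset" "HOL-Library.Product_Lexorder"
begin

(* Let z_i and z_j sit at positions a < b. If b = a + 1, the generator s_{a,a+1} exchanges
   the two labels without changing the arcs: equal valences, together with the arcs joining
   a and a + 1, force equally many arcs from a and from a + 1 to the outside, so the reflected
   inside endpoints of the crossing arcs come in the same order as before. Otherwise s_{a+1,b}
   brings z_j next to z_i, and s_{a+1,b} s_{a,a+1} s_{a+1,b} does the job, because the action
   commutes with relabelling and each s_{p,q} acts as an involution on diagrams. The involution
   is where non-crossing enters: it makes the crossing arcs, read along the chord, also sorted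
   by outside endpoint, so the reconnected crossing sequence is the canonically ordered crossing
   sequence of the reflected diagram, and reflecting once more restores the original arcs. *)

lemma count_list_replicate: "count_list (replicate k y) x = (if y = x then k else 0)"
  by (induction k) auto

lemma count_list_concat_map_replicate:
  "distinct D \<Longrightarrow> count_list (concat (map (\<lambda>d. replicate (f d) d) D)) x = (if x \<in> set D then f x else 0)"
  by (induction D) (auto simp: count_list_replicate)

lemma concat_map_replicate_const:
  "concat (map (\<lambda>c. replicate (k c) x) xs) = replicate (sum_list (map k xs)) x"
  by (induction xs) (simp_all add: replicate_add)

lemma sorted_concat_map_replicate:
  fixes h :: "'a \<Rightarrow> 'b::linorder"
  shows "sorted (map h xs) \<Longrightarrow> sorted (concat (map (\<lambda>c. replicate (k c) (h c)) xs))"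
  by (induction xs) (auto simp: sorted_append)

lemma sorted_wrt_concat_map:
  "(\<And>a. a \<in> set I \<Longrightarrow> sorted_wrt R (f a)) \<Longrightarrow>
   sorted_wrt (\<lambda>a b. \<forall>x\<in>set (f a). \<forall>y\<in>set (f b). R x y) I \<Longrightarrow>
   sorted_wrt R (concat (map f I))"
  by (induction I) (auto simp: sorted_wrt_append)

lemma sorted_zip:
  fixes xs :: "'a::linorder list" and ys :: "'b::linorder list"
  shows "sorted xs \<Longrightarrow> sorted ys \<Longrightarrow> sorted (zip xs ys)"
proof (induction xs arbitrary: ys)
  case (Cons x xs)
  show ?case
  proof (cases ys)
    case (Cons y ys')
    have "(x, y) \<le> (a, b)" if "(a, b) \<in> set (zip xs ys')" for a b
    proof -
      have "x \<le> a" "y \<le> b"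
        using set_zip_leftD[OF that] set_zip_rightD[OF that] Cons.prems \<open>ys = y # ys'\<close> by auto
      then show ?thesis by auto
    qed
    then show ?thesis using Cons.IH Cons.prems \<open>ys = y # ys'\<close> by auto
  qed simp
qed simp

lemma sorted_key_unique:
  assumes "mset xs = mset ys" "inj_on f (set xs)" "sorted (map f xs)" "sorted (map f ys)"
  shows "xs = ys"
proof -
  have "sort_key f xs = xs" using assms(2,3) by (intro sort_key_inj_key_eq) auto
  moreover have "sort_key f xs = ys" using assms by (intro sort_key_inj_key_eq) auto
  ultimately show ?thesis by simp
qed

lemma sum_list_count_list_fst:
  assumes "set (map snd xs) \<subseteq> set Os" "distinct Os"
  shows "sum_list (map (\<lambda>c. count_list xs (t, c)) Os) = count_list (map fst xs) t"
  using assms(1)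
proof (induction xs)
  case (Cons x xs)
  obtain a b where x: "x = (a, b)" by fastforce
  have "b \<in> set Os" using Cons.prems x by auto
  then have "sum_list (map (\<lambda>c. if x = (t, c) then 1 else 0) Os) = (if a = t then 1 else 0::nat)"
    using assms(2) x by (simp add: sum_list_distinct_conv_sum_set)
  moreover have "count_list (x # xs) (t, c) = count_list xs (t, c) + (if x = (t, c) then 1 else 0)" for c
    by simp
  ultimately show ?case using Cons x by (simp only: sum_list_addf) simp
qed simp

lemma sum_list_count_list_snd:
  assumes "set (map fst xs) \<subseteq> set Is" "distinct Is"
  shows "sum_list (map (\<lambda>a. count_list xs (a, t)) Is) = count_list (map snd xs) t"
proof -
  have "count_list (map prod.swap xs) (t, a) = count_list xs (a, t)" for a
    by (induction xs) auto
  then show ?thesis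
    using sum_list_count_list_fst[of "map prod.swap xs" Is t] assms by (simp add: comp_def)
qed

lemma refl_pos_involution [simp]: "refl_pos p q (refl_pos p q a) = a"
  unfolding refl_pos_def by auto

lemma refl_pos_mem: "a \<in> {p..q} \<Longrightarrow> refl_pos p q a \<in> {p..q}"
  unfolding refl_pos_def by auto

lemma refl_pos_outside: "a \<notin> {p..q} \<Longrightarrow> refl_pos p q a = a"
  unfolding refl_pos_def by auto

lemma sum_list_map_refl_pos:
  "sum_list (map (\<lambda>a. g (refl_pos p q a)) [p..<Suc q]) = (sum_list (map g [p..<Suc q]) :: nat)"
proof -
  have rev: "map (refl_pos p q) [p..<Suc q] = rev [p..<Suc q]"
    by (rule nth_equalityI) (auto simp: refl_pos_def rev_nth simp del: upt_Suc)
  have "map (\<lambda>a. g (refl_pos p q a)) [p..<Suc q] = map g (map (refl_pos p q) [p..<Suc q])"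
    by simp
  also have "\<dots> = rev (map g [p..<Suc q])"
    by (simp only: rev rev_map)
  finally show ?thesis by (simp only: sum_list_rev)
qed

lemma set_outs: "p \<le> q \<Longrightarrow> q \<le> n \<Longrightarrow> set (outs n p q) = {..n} - {p..q}"
  unfolding outs_def by auto

lemma distinct_outs: "p \<le> q \<Longrightarrow> distinct (outs n p q)"
  unfolding outs_def by auto

definition reflect_arcs :: "nat \<Rightarrow> nat \<Rightarrow> nat \<Rightarrow> (nat \<Rightarrow> nat \<Rightarrow> nat) \<Rightarrow> nat \<Rightarrow> nat \<Rightarrow> nat" where
  "reflect_arcs n p q m = (\<lambda>a b. if n < a \<or> n < b then 0
     else if (p \<le> a \<and> a \<le> q) \<and> (p \<le> b \<and> b \<le> q) then m (refl_pos p q a) (refl_pos p q b)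
     else if \<not> (p \<le> a \<and> a \<le> q) \<and> \<not> (p \<le> b \<and> b \<le> q) then m a b
     else if p \<le> a \<and> a \<le> q then count_list (new_crossings n p q m) (a, b)
     else count_list (new_crossings n p q m) (b, a))"

lemma s_act_eq: "s_act n p q x = (\<lambda>a. fst x (refl_pos p q a), reflect_arcs n p q (snd x))"
  unfolding s_act_def reflect_arcs_def Let_def by simp

lemma reflect_arcs_beyond: "n < a \<or> n < b \<Longrightarrow> reflect_arcs n p q m a b = 0"
  unfolding reflect_arcs_def by simp

lemma reflect_arcs_in_in:
  "a \<le> n \<Longrightarrow> b \<le> n \<Longrightarrow> a \<in> {p..q} \<Longrightarrow> b \<in> {p..q} \<Longrightarrow>
   reflect_arcs n p q m a b = m (refl_pos p q a) (refl_pos p q b)"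
  unfolding reflect_arcs_def by simp

lemma reflect_arcs_out_out:
  "a \<le> n \<Longrightarrow> b \<le> n \<Longrightarrow> a \<notin> {p..q} \<Longrightarrow> b \<notin> {p..q} \<Longrightarrow> reflect_arcs n p q m a b = m a b"
  unfolding reflect_arcs_def by auto

lemma reflect_arcs_in_out:
  "a \<le> n \<Longrightarrow> b \<le> n \<Longrightarrow> a \<in> {p..q} \<Longrightarrow> b \<notin> {p..q} \<Longrightarrow>
   reflect_arcs n p q m a b = count_list (new_crossings n p q m) (a, b)"
  unfolding reflect_arcs_def by auto

lemma reflect_arcs_out_in:
  "a \<le> n \<Longrightarrow> b \<le> n \<Longrightarrow> a \<notin> {p..q} \<Longrightarrow> b \<in> {p..q} \<Longrightarrow>
   reflect_arcs n p q m a b = count_list (new_crossings n p q m) (b, a)"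
  unfolding reflect_arcs_def by auto

lemma reflect_arcs_sym: "(\<And>a b. m a b = m b a) \<Longrightarrow> reflect_arcs n p q m a b = reflect_arcs n p q m b a"
  unfolding reflect_arcs_def by auto

lemma reflect_arcs_diag: "(\<And>a. m a a = 0) \<Longrightarrow> reflect_arcs n p q m a a = 0"
  unfolding reflect_arcs_def by auto

definition chord_slots :: "nat \<Rightarrow> nat \<Rightarrow> nat \<Rightarrow> (nat \<times> nat) list" where
  "chord_slots n p q = concat (map (\<lambda>a. map (\<lambda>c. (a, c)) (rev (outs n p q))) [p..<Suc q])"

text \<open>\<open>outside_rank n p q c\<close> is the index of \<open>c\<close> in \<open>rev (outs n p q)\<close>.\<close>

definition outside_rank :: "nat \<Rightarrow> nat \<Rightarrow> nat \<Rightarrow> nat \<Rightarrow> nat" where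
  "outside_rank n p q c = (if c < p then p - 1 - c else p + n - c)"

definition slot_key :: "nat \<Rightarrow> nat \<Rightarrow> nat \<Rightarrow> nat \<times> nat \<Rightarrow> nat \<times> nat" where
  "slot_key n p q = (\<lambda>(a, c). (a, outside_rank n p q c))"

lemma crossings_eq_slots:
  "crossings n p q m = concat (map (\<lambda>d. replicate (case_prod m d) d) (chord_slots n p q))"
proof -
  have concat_concat: "concat (concat xss) = concat (map concat xss)" for xss :: "'a list list list"
    by (induction xss) auto
  show ?thesis
    unfolding crossings_def chord_slots_def
    by (simp add: map_concat comp_def concat_concat del: upt_Suc)
qed

lemma set_chord_slots: "set (chord_slots n p q) = {p..q} \<times> set (outs n p q)"
  unfolding chord_slots_def by auto

lemma sorted_wrt_outside_rank:
  assumes "p \<le> q"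
  shows "sorted_wrt (<) (map (outside_rank n p q) (rev (outs n p q)))"
proof -
  have "sorted_wrt (<) (map (outside_rank n p q) (rev [0..<p]))"
    unfolding sorted_wrt_map sorted_wrt_rev
    by (rule sorted_wrt_mono_rel[OF _ sorted_wrt_upt]) (auto simp: outside_rank_def)
  moreover have "sorted_wrt (<) (map (outside_rank n p q) (rev [Suc q..<Suc n]))"
    unfolding sorted_wrt_map sorted_wrt_rev
    by (rule sorted_wrt_mono_rel[OF _ sorted_wrt_upt]) (use assms in \<open>auto simp: outside_rank_def\<close>)
  moreover have "outside_rank n p q c < outside_rank n p q c'" if "c < p" "q < c'" "c' \<le> n" for c c'
    using assms that unfolding outside_rank_def by simp
  ultimately show ?thesis
    unfolding outs_def rev_append map_append sorted_wrt_append by auto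
qed

lemma sorted_wrt_slot_key:
  assumes "p \<le> q"
  shows "sorted_wrt (<) (map (slot_key n p q) (chord_slots n p q))"
proof -
  define f where "f = (\<lambda>a. map (\<lambda>c. (a::nat, outside_rank n p q c)) (rev (outs n p q)))"
  have "map (slot_key n p q) (chord_slots n p q) = concat (map f [p..<Suc q])"
    unfolding chord_slots_def f_def slot_key_def by (simp add: map_concat comp_def del: upt_Suc)
  moreover have "sorted_wrt (<) (f a)" for a
    using sorted_wrt_outside_rank[OF assms, of n]
    unfolding f_def sorted_wrt_map by (auto elim: sorted_wrt_mono_rel[rotated])
  moreover have "sorted_wrt (\<lambda>a b. \<forall>x\<in>set (f a). \<forall>y\<in>set (f b). x < y) [p..<Suc q]"
    by (rule sorted_wrt_mono_rel[OF _ sorted_wrt_upt]) (auto simp: f_def)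
  ultimately show ?thesis by (simp add: sorted_wrt_concat_map del: upt_Suc)
qed

lemma distinct_chord_slots: "p \<le> q \<Longrightarrow> distinct (chord_slots n p q)"
  using sorted_wrt_slot_key strict_sorted_iff distinct_map by blast

lemma inj_on_slot_key: "p \<le> q \<Longrightarrow> inj_on (slot_key n p q) (set (chord_slots n p q))"
  using sorted_wrt_slot_key strict_sorted_iff distinct_map by blast

lemma set_crossings: "set (crossings n p q m) \<subseteq> set (chord_slots n p q)"
  unfolding crossings_eq_slots by auto

lemma count_crossings:
  "p \<le> q \<Longrightarrow> a \<in> {p..q} \<Longrightarrow> c \<in> set (outs n p q) \<Longrightarrow> count_list (crossings n p q m) (a, c) = m a c"
  unfolding crossings_eq_slots
  by (simp add: count_list_concat_map_replicate distinct_chord_slots set_chord_slots)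

lemma sorted_crossings: "p \<le> q \<Longrightarrow> sorted (map (slot_key n p q) (crossings n p q m))"
  unfolding crossings_eq_slots map_concat
  by (simp add: comp_def sorted_concat_map_replicate strict_sorted_imp_sorted sorted_wrt_slot_key)

lemma map_fst_crossings:
  "map fst (crossings n p q m) = concat (map (\<lambda>a. replicate (\<Sum>c\<leftarrow>outs n p q. m a c) a) [p..<Suc q])"
proof -
  have sum_list_map_rev: "sum_list (map f (rev xs)) = (sum_list (map f xs) :: nat)" for f xs
    by (induction xs) auto
  show ?thesis
    unfolding crossings_def
    by (simp add: map_concat comp_def concat_map_replicate_const sum_list_map_rev del: upt_Suc)
qed

definition new_inside_ends :: "nat \<Rightarrow> nat \<Rightarrow> nat \<Rightarrow> (nat \<Rightarrow> nat \<Rightarrow> nat) \<Rightarrow> nat list" where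
  "new_inside_ends n p q m =
     concat (map (\<lambda>a. replicate (\<Sum>c\<leftarrow>outs n p q. m (refl_pos p q a) c) a) [p..<Suc q])"

lemma new_crossings_eq_zip:
  "new_crossings n p q m = zip (new_inside_ends n p q m) (map snd (crossings n p q m))"
  unfolding new_crossings_def new_inside_ends_def ..

lemma length_new_inside_ends: "length (new_inside_ends n p q m) = length (crossings n p q m)"
proof -
  have "length (new_inside_ends n p q m) = length (map fst (crossings n p q m))"
    unfolding new_inside_ends_def map_fst_crossings
    by (simp add: length_concat comp_def sum_list_map_refl_pos[where g = "\<lambda>a. \<Sum>c\<leftarrow>outs n p q. m a c"]
        del: upt_Suc)
  then show ?thesis by simp
qed

lemma map_fst_new_crossings: "map fst (new_crossings n p q m) = new_inside_ends n p q m"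
  using length_new_inside_ends by (simp add: new_crossings_eq_zip)

lemma map_snd_new_crossings: "map snd (new_crossings n p q m) = map snd (crossings n p q m)"
  using length_new_inside_ends by (simp add: new_crossings_eq_zip)

lemma set_new_crossings: "set (new_crossings n p q m) \<subseteq> set (chord_slots n p q)"
proof -
  have "set (new_crossings n p q m) \<subseteq> set (new_inside_ends n p q m) \<times> set (map snd (crossings n p q m))"
    unfolding new_crossings_eq_zip by (auto dest: set_zip_leftD set_zip_rightD)
  moreover have "set (new_inside_ends n p q m) \<subseteq> {p..q}"
    unfolding new_inside_ends_def by auto
  ultimately show ?thesis
    using set_crossings[of n p q m] unfolding set_chord_slots by fastforce
qed

lemma count_new_inside_ends:
  "t \<in> {p..q} \<Longrightarrow> count_list (new_inside_ends n p q m) t = (\<Sum>c\<leftarrow>outs n p q. m (refl_pos p q t) c)"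
  unfolding new_inside_ends_def by (subst count_list_concat_map_replicate) auto

lemma sorted_new_inside_ends: "sorted (new_inside_ends n p q m)"
  unfolding new_inside_ends_def
  using sorted_concat_map_replicate[of id "[p..<Suc q]"] by (simp del: upt_Suc)

definition noncrossing :: "(nat \<Rightarrow> nat \<Rightarrow> nat) \<Rightarrow> bool" where
  "noncrossing m \<longleftrightarrow> (\<forall>a b c d. a < c \<and> c < b \<and> b < d \<and> 0 < m a b \<longrightarrow> m c d = 0)"

lemma outside_rank_mono:
  assumes nc: "noncrossing m" and sym: "\<And>a b. m a b = m b a" and pq: "p \<le> q" "q \<le> n"
    and a: "a < a'" "p \<le> a" "a' \<le> q"
    and c: "c \<in> set (outs n p q)" "c' \<in> set (outs n p q)"
    and m: "0 < m a c" "0 < m a' c'"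
  shows "outside_rank n p q c \<le> outside_rank n p q c'"
proof -
  have N: "m y z = 0" if "x < y" "y < w" "w < z" "0 < m x w" for x y w z
    using nc that unfolding noncrossing_def by blast
  have "c \<le> n" "c < p \<or> q < c" "c' \<le> n" "c' < p \<or> q < c'"
    using c set_outs[OF pq] by auto
  moreover have "0 < m c a" "0 < m c' a'" using m sym by metis+
  ultimately show ?thesis
    using N[of c c' a a'] N[of c' a a' c] N[of a a' c c'] a m
    unfolding outside_rank_def by (cases "c < c'") (auto split: if_splits)
qed

lemma sorted_outside_rank_crossings:
  assumes nc: "noncrossing m" and sym: "\<And>a b. m a b = m b a" and pq: "p \<le> q" "q \<le> n"
  shows "sorted (map (outside_rank n p q \<circ> snd) (crossings n p q m))"
proof -
  define g where
    "g = (\<lambda>a. concat (map (\<lambda>c. replicate (m a c) (outside_rank n p q c)) (rev (outs n p q))))"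
  have "map (outside_rank n p q \<circ> snd) (crossings n p q m) = concat (map g [p..<Suc q])"
    unfolding crossings_def g_def by (simp add: map_concat comp_def del: upt_Suc)
  moreover have "sorted (g a)" for a
    unfolding g_def
    by (rule sorted_concat_map_replicate)
      (use sorted_wrt_outside_rank[OF pq(1), of n] strict_sorted_imp_sorted in auto)
  moreover have "sorted_wrt (\<lambda>a b. \<forall>x\<in>set (g a). \<forall>y\<in>set (g b). x \<le> y) [p..<Suc q]"
    by (rule sorted_wrt_mono_rel[OF _ sorted_wrt_upt])
      (auto simp: g_def intro: outside_rank_mono[OF nc sym pq])
  ultimately show ?thesis by (simp add: sorted_wrt_concat_map del: upt_Suc)
qed

lemma sorted_new_crossings:
  assumes "noncrossing m" "\<And>a b. m a b = m b a" "p \<le> q" "q \<le> n"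
  shows "sorted (map (slot_key n p q) (new_crossings n p q m))"
proof -
  have "map (slot_key n p q) (new_crossings n p q m) =
        zip (new_inside_ends n p q m) (map (outside_rank n p q \<circ> snd) (crossings n p q m))"
    unfolding new_crossings_eq_zip slot_key_def zip_map2 by (auto simp: comp_def split: prod.splits)
  then show ?thesis
    using sorted_zip[OF sorted_new_inside_ends sorted_outside_rank_crossings[OF assms]] by simp
qed

text \<open>Both lists are sorted by \<open>slot_key\<close> (the right one thanks to non-crossing) and have
  the same multiset of slots, so they coincide.\<close>

lemma crossings_reflect_arcs:
  assumes nc: "noncrossing m" and sym: "\<And>a b. m a b = m b a" and pq: "p \<le> q" "q \<le> n"
  shows "crossings n p q (reflect_arcs n p q m) = new_crossings n p q m"
proof (rule sorted_key_unique)
  show "mset (crossings n p q (reflect_arcs n p q m)) = mset (new_crossings n p q m)"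
  proof (rule multiset_eqI)
    fix d
    show "count (mset (crossings n p q (reflect_arcs n p q m))) d = count (mset (new_crossings n p q m)) d"
    proof (cases "d \<in> set (chord_slots n p q)")
      case True
      then obtain a c where d: "d = (a, c)" "a \<in> {p..q}" "c \<in> set (outs n p q)"
        by (auto simp: set_chord_slots)
      then have "c \<le> n" "c \<notin> {p..q}" using set_outs[OF pq] by auto
      then show ?thesis
        using d pq by (simp add: count_mset count_crossings reflect_arcs_in_out)
    next
      case False
      then show ?thesis
        using set_crossings set_new_crossings by (metis count_mset count_notin subsetD)
    qed
  qed
  show "inj_on (slot_key n p q) (set (crossings n p q (reflect_arcs n p q m)))"
    using inj_on_slot_key[OF pq(1)] set_crossings by (rule inj_on_subset)
  show "sorted (map (slot_key n p q) (crossings n p q (reflect_arcs n p q m)))"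
    by (rule sorted_crossings[OF pq(1)])
  show "sorted (map (slot_key n p q) (new_crossings n p q m))"
    by (rule sorted_new_crossings[OF assms])
qed

lemma sum_outs_reflect_arcs:
  assumes pq: "p \<le> q" "q \<le> n" and t: "t \<in> {p..q}"
  shows "(\<Sum>c\<leftarrow>outs n p q. reflect_arcs n p q m t c) = (\<Sum>c\<leftarrow>outs n p q. m (refl_pos p q t) c)"
proof -
  have "(\<Sum>c\<leftarrow>outs n p q. reflect_arcs n p q m t c)
        = (\<Sum>c\<leftarrow>outs n p q. count_list (new_crossings n p q m) (t, c))"
    using t pq by (intro arg_cong[where f = sum_list] map_cong refl reflect_arcs_in_out)
      (auto simp: set_outs)
  also have "\<dots> = count_list (new_inside_ends n p q m) t"
    unfolding map_fst_new_crossings[symmetric]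
    by (rule sum_list_count_list_fst)
      (use set_new_crossings[of n p q m] distinct_outs[OF pq(1)] in \<open>auto simp: set_chord_slots\<close>)
  also have "\<dots> = (\<Sum>c\<leftarrow>outs n p q. m (refl_pos p q t) c)"
    using t by (rule count_new_inside_ends)
  finally show ?thesis .
qed

lemma new_inside_ends_reflect_arcs:
  assumes pq: "p \<le> q" "q \<le> n"
  shows "new_inside_ends n p q (reflect_arcs n p q m) = map fst (crossings n p q m)"
  unfolding new_inside_ends_def map_fst_crossings
  using sum_outs_reflect_arcs[OF pq refl_pos_mem]
  by (intro arg_cong[where f = concat] map_cong refl arg_cong[where f = "\<lambda>k. replicate k _"])
    (simp add: atLeastLessThanSuc_atLeastAtMost del: upt_Suc)

lemma new_crossings_reflect_arcs:
  assumes "noncrossing m" "\<And>a b. m a b = m b a" "p \<le> q" "q \<le> n"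
  shows "new_crossings n p q (reflect_arcs n p q m) = crossings n p q m"
proof -
  have "new_crossings n p q (reflect_arcs n p q m)
        = zip (map fst (crossings n p q m)) (map snd (new_crossings n p q m))"
    by (simp only: new_crossings_eq_zip new_inside_ends_reflect_arcs[OF assms(3,4)] crossings_reflect_arcs[OF assms])
  also have "\<dots> = crossings n p q m"
    by (simp only: map_snd_new_crossings zip_map_fst_snd)
  finally show ?thesis .
qed

lemma reflect_arcs_eqI:
  assumes sym: "\<And>a b. m a b = m b a" and pq: "p \<le> q" "q \<le> n"
    and beyond: "\<And>a b. n < a \<Longrightarrow> m a b = 0"
    and inside: "\<And>a b. a \<in> {p..q} \<Longrightarrow> b \<in> {p..q} \<Longrightarrow> m' (refl_pos p q a) (refl_pos p q b) = m a b"
    and outside: "\<And>a b. a \<le> n \<Longrightarrow> b \<le> n \<Longrightarrow> a \<notin> {p..q} \<Longrightarrow> b \<notin> {p..q} \<Longrightarrow> m' a b = m a b"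
    and crossing: "new_crossings n p q m' = crossings n p q m"
  shows "reflect_arcs n p q m' = m"
proof (intro ext)
  fix a b
  show "reflect_arcs n p q m' a b = m a b"
  proof (cases "n < a \<or> n < b")
    case True
    then show ?thesis using beyond sym reflect_arcs_beyond by metis
  next
    case False
    have outs: "c \<in> set (outs n p q)" if "c \<le> n" "c \<notin> {p..q}" for c
      using that set_outs[OF pq] by auto
    consider "a \<in> {p..q}" "b \<in> {p..q}" | "a \<notin> {p..q}" "b \<notin> {p..q}"
      | "a \<in> {p..q}" "b \<notin> {p..q}" | "a \<notin> {p..q}" "b \<in> {p..q}"
      by blast
    then show ?thesis
    proof cases
      case 1
      then show ?thesis using False inside[of a b] by (simp add: reflect_arcs_in_in)
    next
      case 2
      then show ?thesis using False by (simp add: reflect_arcs_out_out outside)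
    next
      case 3
      then show ?thesis using False pq outs[of b]
        by (simp add: reflect_arcs_in_out crossing count_crossings)
    next
      case 4
      then show ?thesis using False pq outs[of a] sym[of a b]
        by (simp add: reflect_arcs_out_in crossing count_crossings)
    qed
  qed
qed

lemma reflect_arcs_involution:
  assumes "noncrossing m" "\<And>a b. m a b = m b a" "p \<le> q" "q \<le> n"
    and "\<And>a b. n < a \<Longrightarrow> m a b = 0"
  shows "reflect_arcs n p q (reflect_arcs n p q m) = m"
proof (rule reflect_arcs_eqI[OF assms(2-5)])
  fix a b assume ab: "a \<in> {p..q}" "b \<in> {p..q}"
  then have "refl_pos p q a \<in> {p..q}" "refl_pos p q b \<in> {p..q}" by (blast intro: refl_pos_mem)+
  with ab show "reflect_arcs n p q m (refl_pos p q a) (refl_pos p q b) = m a b"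
    using assms(4) by (simp add: reflect_arcs_in_in)
next
  fix a b assume "a \<le> n" "b \<le> n" "a \<notin> {p..q}" "b \<notin> {p..q}"
  then show "reflect_arcs n p q m a b = m a b" by (rule reflect_arcs_out_out)
next
  show "new_crossings n p q (reflect_arcs n p q m) = crossings n p q m"
    by (rule new_crossings_reflect_arcs[OF assms(1-4)])
qed

lemma sum_atMost_split_outs:
  assumes "p \<le> q" "q \<le> n"
  shows "(\<Sum>u\<le>n. f u) = (\<Sum>u\<in>{p..q}. f u) + (\<Sum>u\<leftarrow>outs n p q. f u :: nat)"
proof -
  have "{..n} = {p..q} \<union> set (outs n p q)" "{p..q} \<inter> set (outs n p q) = {}"
    using assms by (auto simp: set_outs)
  then show ?thesis
    by (simp add: sum.union_disjoint sum_list_distinct_conv_sum_set distinct_outs[OF assms(1)])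
qed

lemma sum_inside_reflect_arcs:
  assumes sym: "\<And>a b. m a b = m b a" and pq: "p \<le> q" "q \<le> n" and t: "t \<le> n" "t \<notin> {p..q}"
  shows "(\<Sum>u\<in>{p..q}. reflect_arcs n p q m t u) = (\<Sum>u\<in>{p..q}. m t u)"
proof -
  have tO: "t \<in> set (outs n p q)" using t pq by (simp add: set_outs)
  have sum_inside: "(\<Sum>u\<in>{p..q}. f u) = (\<Sum>u\<leftarrow>[p..<Suc q]. f u)" for f :: "nat \<Rightarrow> nat"
    by (simp add: sum_list_distinct_conv_sum_set atLeastLessThanSuc_atLeastAtMost del: upt_Suc)
  have "(\<Sum>u\<in>{p..q}. reflect_arcs n p q m t u) = (\<Sum>u\<leftarrow>[p..<Suc q]. count_list (new_crossings n p q m) (u, t))"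
    using t pq by (simp add: sum_inside reflect_arcs_out_in del: upt_Suc)
  also have "\<dots> = count_list (map snd (crossings n p q m)) t"
    unfolding map_snd_new_crossings[symmetric]
    by (rule sum_list_count_list_snd)
      (use set_new_crossings[of n p q m] in \<open>auto simp: set_chord_slots\<close>)
  also have "\<dots> = (\<Sum>u\<leftarrow>[p..<Suc q]. count_list (crossings n p q m) (u, t))"
    by (rule sum_list_count_list_snd[symmetric])
      (use set_crossings[of n p q m] in \<open>auto simp: set_chord_slots\<close>)
  also have "\<dots> = (\<Sum>u\<leftarrow>[p..<Suc q]. m u t)"
    using pq tO by (intro arg_cong[where f = sum_list] map_cong refl count_crossings) auto
  also have "\<dots> = (\<Sum>u\<in>{p..q}. m t u)"
    using sym by (simp add: sum_inside del: upt_Suc)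
  finally show ?thesis .
qed

lemma valence_reflect_arcs:
  assumes sym: "\<And>a b. m a b = m b a" and pq: "p \<le> q" "q \<le> n" and t: "t \<le> n"
  shows "(\<Sum>u\<le>n. reflect_arcs n p q m t u) = (\<Sum>u\<le>n. m (refl_pos p q t) u)"
proof (cases "t \<in> {p..q}")
  case True
  have "(\<Sum>u\<in>{p..q}. reflect_arcs n p q m t u) = (\<Sum>u\<in>{p..q}. m (refl_pos p q t) (refl_pos p q u))"
    using True pq by (intro sum.cong refl reflect_arcs_in_in) auto
  also have "\<dots> = (\<Sum>u\<in>{p..q}. m (refl_pos p q t) u)"
    by (rule sum.reindex_bij_witness[of _ "refl_pos p q" "refl_pos p q"]) (auto simp: refl_pos_def)
  finally show ?thesis
    using True pq by (simp add: sum_atMost_split_outs[OF pq] sum_outs_reflect_arcs)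
next
  case False
  have "(\<Sum>u\<leftarrow>outs n p q. reflect_arcs n p q m t u) = (\<Sum>u\<leftarrow>outs n p q. m t u)"
    using False t pq by (intro arg_cong[where f = sum_list] map_cong refl reflect_arcs_out_out)
      (auto simp: set_outs)
  then show ?thesis
    using False t pq sym
    by (simp add: sum_atMost_split_outs[OF pq] sum_inside_reflect_arcs refl_pos_outside)
qed

lemma reflect_arcs_adjacent:
  assumes sym: "\<And>u v. m u v = m v u" and diag: "\<And>u. m u u = 0"
    and beyond: "\<And>u v. n < u \<Longrightarrow> m u v = 0" and a: "Suc a \<le> n"
    and val: "(\<Sum>u\<le>n. m a u) = (\<Sum>u\<le>n. m (Suc a) u)"
  shows "reflect_arcs n a (Suc a) m = m"
proof (rule reflect_arcs_eqI[OF sym _ a beyond])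
  have pair: "{a..Suc a} = {a, Suc a}" by auto
  have outs_eq: "(\<Sum>c\<leftarrow>outs n a (Suc a). m (refl_pos a (Suc a) b) c) = (\<Sum>c\<leftarrow>outs n a (Suc a). m b c)"
    if "b \<in> {a..Suc a}" for b
  proof -
    have split: "(\<Sum>u\<le>n. f u) = f a + f (Suc a) + (\<Sum>u\<leftarrow>outs n a (Suc a). f u :: nat)" for f
      using sum_atMost_split_outs[OF le_SucI[OF order_refl] a] by (simp add: pair)
    have "(\<Sum>c\<leftarrow>outs n a (Suc a). m a c) = (\<Sum>c\<leftarrow>outs n a (Suc a). m (Suc a) c)"
      using val sym[of a "Suc a"] diag[of a] diag[of "Suc a"] by (simp add: split)
    then show ?thesis using that by (auto simp: refl_pos_def pair)
  qed
  have "new_inside_ends n a (Suc a) m = map fst (crossings n a (Suc a) m)"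
    unfolding new_inside_ends_def map_fst_crossings
    using outs_eq by (intro arg_cong[where f = concat] map_cong refl) auto
  then show "new_crossings n a (Suc a) m = crossings n a (Suc a) m"
    by (simp add: new_crossings_eq_zip zip_map_fst_snd)
next
  fix u v assume "u \<in> {a..Suc a}" "v \<in> {a..Suc a}"
  then show "m (refl_pos a (Suc a) u) (refl_pos a (Suc a) v) = m u v"
    using sym diag by (auto simp: refl_pos_def le_Suc_eq)
qed simp_all

lemma s_act_swap_labels: "s_act n p q (swap_labels i j x) = swap_labels i j (s_act n p q x)"
  by (simp add: s_act_eq swap_labels_def cong: if_cong)

lemma swap_labels_commute: "swap_labels i j x = swap_labels j i x"
  by (cases "i = j") (auto simp: swap_labels_def)

lemma s_act_involution:
  assumes "noncrossing (snd x)" "\<And>a b. snd x a b = snd x b a" "p \<le> q" "q \<le> n"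
    and "\<And>a b. n < a \<Longrightarrow> snd x a b = 0"
  shows "s_act n p q (s_act n p q x) = x"
  using reflect_arcs_involution[OF assms] by (simp add: s_act_eq)

lemma s_act_adjacent_swap:
  assumes sym: "\<And>u v. m u v = m v u" and diag: "\<And>u. m u u = 0"
    and beyond: "\<And>u v. n < u \<Longrightarrow> m u v = 0" and a: "Suc a \<le> n"
    and val: "(\<Sum>u\<le>n. m a u) = (\<Sum>u\<le>n. m (Suc a) u)"
    and at_a: "\<And>t. lab t = i \<longleftrightarrow> t = a" and at_Suc_a: "\<And>t. lab t = j \<longleftrightarrow> t = Suc a"
  shows "s_act n a (Suc a) (lab, m) = swap_labels i j (lab, m)"
proof -
  have "lab (refl_pos a (Suc a) t) = (if lab t = i then j else if lab t = j then i else lab t)" for t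
    using at_a[of t] at_Suc_a[of t] at_a[of "Suc a"] at_Suc_a[of a]
      at_a[of "refl_pos a (Suc a) t"] at_Suc_a[of "refl_pos a (Suc a) t"]
    by (auto simp: refl_pos_def)
  then show ?thesis
    by (simp add: s_act_eq swap_labels_def reflect_arcs_adjacent[OF assms(1-5)] cong: if_cong)
qed

lemma s_act_conjugate_swap:
  assumes sym: "\<And>u v. m u v = m v u" and diag: "\<And>u. m u u = 0"
    and beyond: "\<And>u v. n < u \<Longrightarrow> m u v = 0" and nc: "noncrossing m"
    and ab: "Suc a < b" "b \<le> n" and val: "(\<Sum>u\<le>n. m a u) = (\<Sum>u\<le>n. m b u)"
    and at_a: "\<And>t. lab t = i \<longleftrightarrow> t = a" and at_b: "\<And>t. lab t = j \<longleftrightarrow> t = b"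
  shows "act_word n [(Suc a, b), (a, Suc a), (Suc a, b)] (lab, m) = swap_labels i j (lab, m)"
proof -
  have pq: "Suc a \<le> b" "b \<le> n" using ab by auto
  define y where "y = s_act n (Suc a) b (lab, m)"
  define M where "M = reflect_arcs n (Suc a) b m"
  have y: "y = (\<lambda>t. lab (refl_pos (Suc a) b t), M)" by (simp add: y_def M_def s_act_eq)
  have refl_a: "refl_pos (Suc a) b a = a" and refl_Suc_a: "refl_pos (Suc a) b (Suc a) = b"
    using pq by (auto simp: refl_pos_def)
  have "s_act n a (Suc a) y = swap_labels i j y"
    unfolding y
  proof (rule s_act_adjacent_swap)
    show "M u v = M v u" "M u u = 0" for u v unfolding M_def
      by (simp_all add: reflect_arcs_sym[OF sym] reflect_arcs_diag[OF diag])
    show "n < u \<Longrightarrow> M u v = 0" for u v unfolding M_def by (simp add: reflect_arcs_beyond)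
    show "(\<Sum>u\<le>n. M a u) = (\<Sum>u\<le>n. M (Suc a) u)"
      unfolding M_def using val pq by (simp add: valence_reflect_arcs[OF sym pq] refl_a refl_Suc_a)
    show "lab (refl_pos (Suc a) b t) = i \<longleftrightarrow> t = a" for t
      using at_a[of "refl_pos (Suc a) b t"] refl_a by (metis refl_pos_involution)
    show "lab (refl_pos (Suc a) b t) = j \<longleftrightarrow> t = Suc a" for t
      using at_b[of "refl_pos (Suc a) b t"] refl_Suc_a by (metis refl_pos_involution)
  qed (use pq in simp)
  moreover have "s_act n (Suc a) b y = (lab, m)"
    unfolding y_def using s_act_involution[of "(lab, m)"] nc sym pq beyond by simp
  ultimately show ?thesis
    by (simp add: act_word_def y_def[symmetric] s_act_swap_labels)
qed

lemma label_position:
  assumes x: "is_diagram n l linf (lab, m)" and k: "k \<in> {1..n}"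
  shows "\<exists>a\<in>{1..n}. \<forall>t. lab t = k \<longleftrightarrow> t = a"
proof -
  have bij: "bij_betw lab {1..n} {1..n}" and zero: "\<And>t. t \<notin> {1..n} \<Longrightarrow> lab t = 0"
    using x unfolding is_diagram_def Let_def by auto
  obtain a where a: "a \<in> {1..n}" "lab a = k"
    using bij k by (metis bij_betw_imp_surj_on imageE)
  have "t = a" if "lab t = k" for t
  proof -
    have "t \<in> {1..n}" using zero[of t] that k by fastforce
    then show ?thesis using bij a that unfolding bij_betw_def inj_on_def by blast
  qed
  then show ?thesis using a by blast
qed

lemma swap_labels_by_cactus_word:
  assumes x: "is_diagram n l linf (lab, m)" and ab: "1 \<le> a" "a < b" "b \<le> n"
    and at_a: "\<And>t. lab t = i \<longleftrightarrow> t = a" and at_b: "\<And>t. lab t = j \<longleftrightarrow> t = b"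
    and val: "l i = l j"
  shows "\<exists>w. cactus_word n w \<and> act_word n w (lab, m) = swap_labels i j (lab, m)"
proof -
  have sym: "\<And>u v. m u v = m v u" and diag: "\<And>u. m u u = 0" and beyond: "\<And>u v. n < u \<Longrightarrow> m u v = 0"
    and nc: "noncrossing m" and valence: "\<And>p. p \<in> {1..n} \<Longrightarrow> (\<Sum>u\<le>n. m p u) = l (lab p)"
    using x unfolding is_diagram_def noncrossing_def Let_def by auto
  have val_ab: "(\<Sum>u\<le>n. m a u) = (\<Sum>u\<le>n. m b u)"
    using valence[of a] valence[of b] ab at_a[of a] at_b[of b] val by simp
  show ?thesis
  proof (cases "b = Suc a")
    case True
    have "s_act n a (Suc a) (lab, m) = swap_labels i j (lab, m)"
      by (rule s_act_adjacent_swap[OF sym diag beyond]) (use True ab val_ab at_a at_b in auto)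
    moreover have "cactus_word n [(a, Suc a)]" using True ab by (simp add: cactus_word_def)
    ultimately show ?thesis by (intro exI[of _ "[(a, Suc a)]"]) (simp add: act_word_def)
  next
    case False
    then have "Suc a < b" using ab by simp
    moreover have "cactus_word n [(Suc a, b), (a, Suc a), (Suc a, b)]"
      using ab False by (auto simp: cactus_word_def)
    ultimately show ?thesis
      using s_act_conjugate_swap[OF sym diag beyond nc _ ab(3) val_ab at_a at_b] by blast
  qed
qed

theorem mainTheorem2:
  fixes n :: nat and l :: "nat \<Rightarrow> nat" and linf :: nat and x :: diagram and i j :: nat
  assumes "x \<in> X n l linf"
    and "i \<in> {1..n}" and "j \<in> {1..n}" and "i \<noteq> j"
    and "l i = l j"
  shows "\<exists>w. cactus_word n w \<and> act_word n w x = swap_labels i j x"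
proof -
  obtain lab m where x: "x = (lab, m)" by fastforce
  have d: "is_diagram n l linf (lab, m)" using assms(1) x by (simp add: X_def)
  obtain a b where a: "a \<in> {1..n}" "\<And>t. lab t = i \<longleftrightarrow> t = a"
    and b: "b \<in> {1..n}" "\<And>t. lab t = j \<longleftrightarrow> t = b"
    using label_position[OF d assms(2)] label_position[OF d assms(3)] by metis
  have "a \<noteq> b" using a(2)[of a] b(2)[of a] assms(4) by auto
  then consider "a < b" | "b < a" by linarith
  then show ?thesis
  proof cases
    case 1
    then show ?thesis using swap_labels_by_cactus_word[OF d _ 1 _ a(2) b(2) assms(5)] a b x by auto
  next
    case 2
    then show ?thesis using swap_labels_by_cactus_word[OF d _ 2 _ b(2) a(2) assms(5)[symmetric]] a b x
      by (auto simp: swap_labels_commute)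
  qed
qed

end
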